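(* Let $i,j,k$ be distinct jobs such that $(i,j)$ and $(i,k)$ are red pairs and $t_j\le t_k$. Then $D^*(j,k)\ge(\nu+\nu^2)t_k$ and, in the schedule produced by $1$-SORT, $D(j,k)\le\left(1+\frac{1}{\nu+\nu^2}\right)D^*(j,k)$.
   Context: Setting: single machine, jobs $J=\{1,\dots,n\}$, each job $j$ with test time $t_j\ge0$ and processing time $p_j\ge0$ (revealed only when the test is executed); each job's test must be executed before its processing part, which may start any time after the test; operations are non-preemptive and the machine does one at a time. $\sigma_j=t_j+p_j$, $m_j=\max\{t_j,p_j\}$. Standing assumption (general position): no two of the $3n$ numbers $t_j,p_j,\sigma_j$ are equal. Algorithm $1$-SORT: keep a priority queue of available operations, initially the test of every job $j$ with priority $t_j$; repeatedly remove a minimum-priority operation and execute it immediately; after executing the test of $j$, insert the processing part of $j$ with priority $p_j$. For distinct jobs $j,k$, let $d_{k,j}$ be the total amount of time during which operations of $k$ are executed before the completion time of $j$, and $D(j,k)=d_{j,k}+d_{k,j}$, evaluated for the $1$-SORT schedule; $D^*(j,k)=\min\{\sigma_j,\sigma_k\}$. Fix constants $\mu>1$ and $0<\nu<1$ with $\mu\nu>1$ and $1+\frac1\mu\le\nu+\nu^2$. A job $j$ is imbalanced if $m_j\ge\mu\min\{t_j,p_j\}$. For distinct jobs $j,k$, the ordered pair $(j,k)$ is a red pair if $j$ is imbalanced, $m_j\ge t_k\ge\nu m_j$, and $p_k\ge\nu t_k$. *)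

theory Defs
  imports Complex_Main
begin

text \<open>An operation is a pair (j, b): b = False is the test of job j,
  b = True is the processing part of job j.\<close>

type_synonym 'a op = "'a \<times> bool"

definition dur :: "('a \<Rightarrow> real) \<Rightarrow> ('a \<Rightarrow> real) \<Rightarrow> 'a op \<Rightarrow> real" where
  "dur t p x = (if snd x then p (fst x) else t (fst x))"

text \<open>Simulation of 1-SORT: Q is the priority queue (set of available operations);
  the priority of an operation equals its length.  The result is the execution order; operations
  are executed back to back (no idle time).\<close>

primrec run :: "('a \<Rightarrow> real) \<Rightarrow> ('a \<Rightarrow> real) \<Rightarrow> nat \<Rightarrow> 'a op set \<Rightarrow> 'a op list" where
  "run t p 0 Q = []"
| "run t p (Suc m) Q =
     (if Q = {} then []
      else (let x = (ARG_MIN (dur t p) y. y \<in> Q)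
            in x # run t p m ((Q - {x}) \<union> (if snd x then {} else {(fst x, True)}))))"

definition sort1 :: "'a set \<Rightarrow> ('a \<Rightarrow> real) \<Rightarrow> ('a \<Rightarrow> real) \<Rightarrow> 'a op list" where
  "sort1 J t p = run t p (2 * card J) ((\<lambda>j. (j, False)) ` J)"

definition dd :: "'a set \<Rightarrow> ('a \<Rightarrow> real) \<Rightarrow> ('a \<Rightarrow> real) \<Rightarrow> 'a \<Rightarrow> 'a \<Rightarrow> real" where
  "dd J t p k j =
     sum_list (map (dur t p)
       (filter (\<lambda>x. fst x = k) (takeWhile (\<lambda>x. x \<noteq> (j, True)) (sort1 J t p))))"

definition DD :: "'a set \<Rightarrow> ('a \<Rightarrow> real) \<Rightarrow> ('a \<Rightarrow> real) \<Rightarrow> 'a \<Rightarrow> 'a \<Rightarrow> real" where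
  "DD J t p j k = dd J t p j k + dd J t p k j"

definition Dstar :: "('a \<Rightarrow> real) \<Rightarrow> ('a \<Rightarrow> real) \<Rightarrow> 'a \<Rightarrow> 'a \<Rightarrow> real" where
  "Dstar t p j k = min (t j + p j) (t k + p k)"

definition general_position :: "'a set \<Rightarrow> ('a \<Rightarrow> real) \<Rightarrow> ('a \<Rightarrow> real) \<Rightarrow> bool" where
  "general_position J t p \<longleftrightarrow>
     (\<forall>j\<in>J. \<forall>k\<in>J.
        t j \<noteq> p k \<and> t j \<noteq> t k + p k \<and> p j \<noteq> t k + p k \<and>
        (j \<noteq> k \<longrightarrow> t j \<noteq> t k \<and> p j \<noteq> p k \<and> t j + p j \<noteq> t k + p k))"

definition imbalanced :: "real \<Rightarrow> ('a \<Rightarrow> real) \<Rightarrow> ('a \<Rightarrow> real) \<Rightarrow> 'a \<Rightarrow> bool" where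
  "imbalanced \<mu> t p j \<longleftrightarrow> max (t j) (p j) \<ge> \<mu> * min (t j) (p j)"

definition red_pair :: "real \<Rightarrow> real \<Rightarrow> ('a \<Rightarrow> real) \<Rightarrow> ('a \<Rightarrow> real) \<Rightarrow> 'a \<Rightarrow> 'a \<Rightarrow> bool" where
  "red_pair \<mu> \<nu> t p j k \<longleftrightarrow>
     j \<noteq> k \<and> imbalanced \<mu> t p j \<and>
     max (t j) (p j) \<ge> t k \<and> t k \<ge> \<nu> * max (t j) (p j) \<and> p k \<ge> \<nu> * t k"

end

theory Submission
  imports Defs
begin

text \<open>Since \<open>t\<^sub>j < t\<^sub>k\<close>, 1-SORT tests j before k, and every operation executed
  while the processing part of a job is queued is at most as long as that part.  So if k is
  tested before j completes then \<open>t\<^sub>k \<le> p\<^sub>j\<close>, and the processing part completed first is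
  the shorter one; a case analysis on the completion order gives \<open>D(j,k) \<le> D\<^sup>*(j,k) + t\<^sub>k\<close>.
  For two red pairs sharing the imbalanced job i, \<open>t\<^sub>j \<ge> \<nu> m\<^sub>i \<ge> \<nu> t\<^sub>k\<close> and
  \<open>p\<^sub>j \<ge> \<nu> t\<^sub>j\<close> give \<open>\<sigma>\<^sub>j \<ge> (\<nu> + \<nu>\<^sup>2) t\<^sub>k\<close>, and \<open>p\<^sub>k \<ge> \<nu> t\<^sub>k\<close> gives
  \<open>\<sigma>\<^sub>k \<ge> (1 + \<nu>) t\<^sub>k\<close>; hence \<open>t\<^sub>k \<le> D\<^sup>*(j,k) / (\<nu> + \<nu>\<^sup>2)\<close>.\<close>

definition next_op :: "('a \<Rightarrow> real) \<Rightarrow> ('a \<Rightarrow> real) \<Rightarrow> 'a op set \<Rightarrow> 'a op" where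
  "next_op t p Q = (ARG_MIN (dur t p) y. y \<in> Q)"

definition queue_step :: "('a \<Rightarrow> real) \<Rightarrow> ('a \<Rightarrow> real) \<Rightarrow> 'a op set \<Rightarrow> 'a op set" where
  "queue_step t p Q = (Q - {next_op t p Q}) \<union>
     (if snd (next_op t p Q) then {} else {(fst (next_op t p Q), True)})"

lemma run_Suc_nonempty:
  "Q \<noteq> {} \<Longrightarrow> run t p (Suc n) Q = next_op t p Q # run t p n (queue_step t p Q)"
  by (simp add: next_op_def queue_step_def Let_def)

lemma next_op_min:
  assumes "finite Q" "Q \<noteq> {}"
  shows "next_op t p Q \<in> Q \<and> (\<forall>y\<in>Q. dur t p (next_op t p Q) \<le> dur t p y)"
  using arg_min_if_finite[OF assms, of "dur t p"]
  unfolding arg_min_on_def next_op_def by (auto simp: not_less)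

lemma finite_queue_step: "finite Q \<Longrightarrow> finite (queue_step t p Q)"
  by (simp add: queue_step_def)

lemma run_dur_le_queued:
  assumes "finite Q" "distinct (run t p n Q)" "a < b" "b < length (run t p n Q)"
    and "run t p n Q ! b \<in> Q"
  shows "dur t p (run t p n Q ! a) \<le> dur t p (run t p n Q ! b)"
  using assms
proof (induction n arbitrary: Q a b)
  case 0
  then show ?case by simp
next
  case (Suc n)
  have Q: "Q \<noteq> {}" using Suc.prems by auto
  note run = run_Suc_nonempty[OF Q, of t p n]
  show ?case
  proof (cases a)
    case 0
    then show ?thesis using Suc.prems next_op_min[OF Suc.prems(1) Q, of t p] run by auto
  next
    case (Suc a')
    obtain b' where b: "b = Suc b'" using Suc.prems(3) by (cases b) auto
    have "run t p (Suc n) Q ! b \<noteq> next_op t p Q"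
      using nth_eq_iff_index_eq[OF Suc.prems(2), of 0 b] Suc.prems(4) b run by auto
    then have "run t p n (queue_step t p Q) ! b' \<in> queue_step t p Q"
      using Suc.prems(5) run b by (auto simp: queue_step_def)
    then show ?thesis
      using Suc.IH[of "queue_step t p Q" a' b'] Suc.prems run b \<open>a = Suc a'\<close> finite_queue_step
      by auto
  qed
qed

text \<open>Between the test of e and its processing part, the latter is queued.\<close>

lemma run_dur_le_processing:
  assumes "finite Q" "distinct (run t p n Q)" "c < a" "a < b" "b < length (run t p n Q)"
    and "run t p n Q ! c = (e, False)" "run t p n Q ! b = (e, True)"
  shows "dur t p (run t p n Q ! a) \<le> dur t p (run t p n Q ! b)"
  using assms
proof (induction n arbitrary: Q a b c)
  case 0
  then show ?case by simp
next
  case (Suc n)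
  have Q: "Q \<noteq> {}" using Suc.prems by auto
  note run = run_Suc_nonempty[OF Q, of t p n]
  obtain a' where a: "a = Suc a'" using Suc.prems(3) by (cases a) auto
  obtain b' where b: "b = Suc b'" using Suc.prems(4) a by (cases b) auto
  show ?case
  proof (cases c)
    case 0
    then have "next_op t p Q = (e, False)" using Suc.prems(6) run by simp
    then have "run t p n (queue_step t p Q) ! b' \<in> queue_step t p Q"
      using Suc.prems(7) run b by (auto simp: queue_step_def)
    then show ?thesis
      using run_dur_le_queued[of "queue_step t p Q" t p n a' b'] Suc.prems run a b finite_queue_step
      by auto
  next
    case (Suc c')
    then show ?thesis
      using Suc.IH[of "queue_step t p Q" c' a' b'] Suc.prems run a b finite_queue_step by auto
  qed
qed

lemma run_test_before_processing:
  assumes "finite Q" "(e, True) \<notin> Q" "distinct (run t p n Q)"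
    and "b < length (run t p n Q)" "c < length (run t p n Q)"
    and "run t p n Q ! b = (e, True)" "run t p n Q ! c = (e, False)"
  shows "c < b"
  using assms
proof (induction n arbitrary: Q b c)
  case 0
  then show ?case by simp
next
  case (Suc n)
  have Q: "Q \<noteq> {}" using Suc.prems by auto
  note run = run_Suc_nonempty[OF Q, of t p n]
  obtain b' where b: "b = Suc b'"
    using Suc.prems(2,6) run next_op_min[OF Suc.prems(1) Q, of t p] by (cases b) auto
  show ?case
  proof (cases c)
    case 0
    then show ?thesis using b by simp
  next
    case (Suc c')
    have "next_op t p Q \<noteq> (e, False)"
      using nth_eq_iff_index_eq[OF Suc.prems(3), of 0 c] Suc.prems(5,7) Suc run by auto
    then have "(e, True) \<notin> queue_step t p Q"
      using Suc.prems(2) unfolding queue_step_def by (cases "next_op t p Q") auto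
    then show ?thesis
      using Suc.IH[of "queue_step t p Q" b' c'] finite_queue_step[OF Suc.prems(1)] Suc.prems run b Suc
      by auto
  qed
qed

subsection \<open>Every operation is executed exactly once\<close>

definition single_stage :: "'a op set \<Rightarrow> bool" where
  "single_stage Q \<longleftrightarrow> (\<forall>a. (a, True) \<in> Q \<longrightarrow> (a, False) \<notin> Q)"

definition pending :: "'a op set \<Rightarrow> 'a op set" where
  "pending Q = Q \<union> {(a, True) | a. (a, False) \<in> Q}"

definition work_left :: "'a op set \<Rightarrow> nat" where
  "work_left Q = card Q + card {y \<in> Q. \<not> snd y}"

lemma single_stage_queue_step:
  "finite Q \<Longrightarrow> Q \<noteq> {} \<Longrightarrow> single_stage Q \<Longrightarrow> single_stage (queue_step t p Q)"
  using next_op_min[of Q t p] unfolding single_stage_def queue_step_def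
  by (cases "next_op t p Q") (auto split: if_splits)

lemma pending_queue_step:
  assumes "finite Q" "Q \<noteq> {}"
  shows "pending (queue_step t p Q) \<subseteq> pending Q"
    and "pending Q \<subseteq> insert (next_op t p Q) (pending (queue_step t p Q))"
    and "single_stage Q \<Longrightarrow> next_op t p Q \<notin> pending (queue_step t p Q)"
  using next_op_min[OF assms, of t p] unfolding single_stage_def pending_def queue_step_def
  by (cases "next_op t p Q"; auto split: if_splits)+

lemma work_left_queue_step:
  assumes "finite Q" "Q \<noteq> {}" "single_stage Q"
  shows "Suc (work_left (queue_step t p Q)) = work_left Q"
proof -
  note next_op = next_op_min[OF assms(1,2), of t p]
  obtain a b where x: "next_op t p Q = (a, b)" by fastforce
  show ?thesis
  proof (cases b)
    case True
    have step: "queue_step t p Q = Q - {(a, True)}" using x True by (simp add: queue_step_def)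
    have "{y \<in> Q - {(a, True)}. \<not> snd y} = {y \<in> Q. \<not> snd y}" by auto
    then show ?thesis
      unfolding work_left_def step using next_op x True assms(1) card.remove[of Q "(a, True)"]
      by simp
  next
    case False
    have step: "queue_step t p Q = insert (a, True) (Q - {(a, False)})"
      using x False by (auto simp: queue_step_def)
    have "(a, True) \<notin> Q" using assms(3) next_op x False by (auto simp: single_stage_def)
    then have "card (queue_step t p Q) = card Q"
      unfolding step using assms(1) next_op x False card.remove[of Q "(a, False)"] by simp
    moreover have "{y \<in> queue_step t p Q. \<not> snd y} = {y \<in> Q. \<not> snd y} - {(a, False)}"
      unfolding step by auto
    moreover have "Suc (card ({y \<in> Q. \<not> snd y} - {(a, False)})) = card {y \<in> Q. \<not> snd y}"
      using assms(1) next_op x False card.remove[of "{y \<in> Q. \<not> snd y}" "(a, False)"] by simp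
    ultimately show ?thesis unfolding work_left_def by simp
  qed
qed

lemma set_run_subset_pending: "finite Q \<Longrightarrow> set (run t p n Q) \<subseteq> pending Q"
proof (induction n arbitrary: Q)
  case 0
  then show ?case by simp
next
  case (Suc n)
  show ?case
  proof (cases "Q = {}")
    case False
    have "next_op t p Q \<in> pending Q"
      using next_op_min[OF Suc.prems False, of t p] by (auto simp: pending_def)
    then show ?thesis
      using run_Suc_nonempty[OF False, of t p n] Suc.IH[of "queue_step t p Q"]
        finite_queue_step[OF Suc.prems] pending_queue_step(1)[OF Suc.prems False, of t p]
      by auto
  qed simp
qed

lemma distinct_run: "finite Q \<Longrightarrow> single_stage Q \<Longrightarrow> distinct (run t p n Q)"
proof (induction n arbitrary: Q)
  case 0
  then show ?case by simp
next
  case (Suc n)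
  show ?case
  proof (cases "Q = {}")
    case False
    show ?thesis
      using run_Suc_nonempty[OF False, of t p n] Suc.IH[of "queue_step t p Q"]
        finite_queue_step[OF Suc.prems(1)] single_stage_queue_step[OF Suc.prems(1) False Suc.prems(2)]
        pending_queue_step(3)[OF Suc.prems(1) False Suc.prems(2)]
        set_run_subset_pending[of "queue_step t p Q" t p n]
      by auto
  qed simp
qed

lemma pending_subset_set_run:
  "finite Q \<Longrightarrow> single_stage Q \<Longrightarrow> work_left Q \<le> n \<Longrightarrow> pending Q \<subseteq> set (run t p n Q)"
proof (induction n arbitrary: Q)
  case 0
  then have "Q = {}" by (simp add: work_left_def)
  then show ?case by (simp add: pending_def)
next
  case (Suc n)
  show ?case
  proof (cases "Q = {}")
    case True
    then show ?thesis by (simp add: pending_def)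
  next
    case False
    show ?thesis
      using run_Suc_nonempty[OF False, of t p n] Suc.IH[of "queue_step t p Q"]
        finite_queue_step[OF Suc.prems(1)] single_stage_queue_step[OF Suc.prems(1) False Suc.prems(2)]
        work_left_queue_step[OF Suc.prems(1) False Suc.prems(2), of t p] Suc.prems(3)
        pending_queue_step(2)[OF Suc.prems(1) False, of t p]
      by auto
  qed
qed

lemma sort1_eq_run: "sort1 J t p = run t p (work_left ((\<lambda>j. (j, False)) ` J)) ((\<lambda>j. (j, False)) ` J)"
proof -
  have "card ((\<lambda>j. (j, False)) ` J) = card J" by (rule card_image) (auto simp: inj_on_def)
  moreover have "{y \<in> (\<lambda>j. (j, False)) ` J. \<not> snd y} = (\<lambda>j. (j, False)) ` J" by auto
  ultimately show ?thesis by (simp add: sort1_def work_left_def mult_2)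
qed

lemma single_stage_tests: "single_stage ((\<lambda>j. (j, False)) ` J)"
  by (auto simp: single_stage_def)

lemma distinct_sort1: "finite J \<Longrightarrow> distinct (sort1 J t p)"
  unfolding sort1_eq_run by (simp add: distinct_run single_stage_tests)

lemma sort1_contains: "finite J \<Longrightarrow> e \<in> J \<Longrightarrow> (e, b) \<in> set (sort1 J t p)"
  using pending_subset_set_run[OF _ single_stage_tests order.refl, of J t p]
  unfolding sort1_eq_run by (cases b) (auto simp: pending_def)

lemma sort1_dur_le_test:
  assumes "finite J" "e \<in> J" "a < b" "b < length (sort1 J t p)" "sort1 J t p ! b = (e, False)"
  shows "dur t p (sort1 J t p ! a) \<le> dur t p (sort1 J t p ! b)"
proof -
  have "sort1 J t p ! b \<in> (\<lambda>j. (j, False)) ` J" using assms(2,5) by simp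
  then show ?thesis
    using run_dur_le_queued[of "(\<lambda>j. (j, False)) ` J" t p _ a b] assms(1,3,4) distinct_sort1[OF assms(1)]
    unfolding sort1_eq_run by blast
qed

lemma sort1_tests_in_order:
  assumes "finite J" "j \<in> J" "t j < t k"
    and "a < length (sort1 J t p)" "sort1 J t p ! a = (j, False)"
    and "b < length (sort1 J t p)" "sort1 J t p ! b = (k, False)"
  shows "a < b"
proof (rule ccontr)
  assume "\<not> a < b"
  moreover have "a \<noteq> b" using assms(3,5,7) by auto
  ultimately have "b < a" by simp
  then have "dur t p (sort1 J t p ! b) \<le> dur t p (sort1 J t p ! a)"
    using sort1_dur_le_test[OF assms(1,2) _ assms(4,5)] by blast
  then have "t k \<le> t j" using assms(5,7) by (simp add: dur_def)
  then show False using assms(3) by simp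
qed

lemma sort1_dur_le_processing:
  assumes "finite J" "c < a" "a < b" "b < length (sort1 J t p)"
    and "sort1 J t p ! c = (e, False)" "sort1 J t p ! b = (e, True)"
  shows "dur t p (sort1 J t p ! a) \<le> dur t p (sort1 J t p ! b)"
  using run_dur_le_processing[of "(\<lambda>j. (j, False)) ` J" t p _ c a b e] assms distinct_sort1[OF assms(1)]
  unfolding sort1_eq_run by blast

lemma sort1_test_before_processing:
  assumes "finite J" "b < length (sort1 J t p)" "c < length (sort1 J t p)"
    and "sort1 J t p ! b = (e, True)" "sort1 J t p ! c = (e, False)"
  shows "c < b"
proof -
  have "(e, True) \<notin> (\<lambda>j. (j, False)) ` J" by auto
  then show ?thesis
    using run_test_before_processing[of "(\<lambda>j. (j, False)) ` J" e t p _ b c] assms distinct_sort1[OF assms(1)]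
    unfolding sort1_eq_run by blast
qed

lemma takeWhile_neq_nth:
  assumes "distinct L" "i < length L"
  shows "takeWhile (\<lambda>x. x \<noteq> L ! i) L = take i L"
  using assms by (intro takeWhile_eq_take_P_nth) (auto simp: nth_eq_iff_index_eq)

lemma nth_in_set_take_iff:
  assumes "distinct L" "a < length L"
  shows "L ! a \<in> set (take n L) \<longleftrightarrow> a < n"
  using assms by (auto simp: in_set_conv_nth nth_eq_iff_index_eq intro!: exI[of _ a])

lemma sum_job_ops_take:
  assumes "distinct L" "ia < length L" "L ! ia = (k, False)" "ib < length L" "L ! ib = (k, True)"
  shows "sum_list (map (dur t p) (filter (\<lambda>x. fst x = k) (take i L)))
     = (if ia < i then t k else 0) + (if ib < i then p k else 0)"
proof -
  have "set (filter (\<lambda>x. fst x = k) (take i L)) =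
     (if ia < i then {(k, False)} else {}) \<union> (if ib < i then {(k, True)} else {})"
    using nth_in_set_take_iff[OF assms(1,2), of i] nth_in_set_take_iff[OF assms(1,4), of i] assms(3,5)
    by (auto simp: prod_eq_iff) (metis (full_types) prod.collapse)+
  moreover have "distinct (filter (\<lambda>x. fst x = k) (take i L))" using assms(1) by simp
  ultimately show ?thesis by (auto simp: sum_list_distinct_conv_sum_set dur_def)
qed

lemma dd_sort1_eq:
  assumes "finite J" and L: "L = sort1 J t p"
    and "P < length L" "L ! P = (j, True)"
    and "T' < length L" "L ! T' = (k, False)" "P' < length L" "L ! P' = (k, True)"
  shows "dd J t p k j = (if T' < P then t k else 0) + (if P' < P then p k else 0)"
  using assms sum_job_ops_take[of L T' k P' t p P] takeWhile_neq_nth[of L P] distinct_sort1[OF assms(1)]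
  unfolding dd_def by simp

lemma DD_le_Dstar_add:
  assumes "finite J" "j \<in> J" "k \<in> J" "j \<noteq> k" "t j < t k"
    and "t j \<ge> 0" "p j \<ge> 0" "t k \<ge> 0" "p k \<ge> 0"
  shows "DD J t p j k \<le> Dstar t p j k + t k"
proof -
  define L where "L = sort1 J t p"
  obtain TJ PJ TK PK where
    TJ: "TJ < length L" "L ! TJ = (j, False)" and PJ: "PJ < length L" "L ! PJ = (j, True)" and
    TK: "TK < length L" "L ! TK = (k, False)" and PK: "PK < length L" "L ! PK = (k, True)"
    using sort1_contains[OF assms(1)] assms(2,3) unfolding L_def by (metis in_set_conv_nth)
  have TJPJ: "TJ < PJ" and TKPK: "TK < PK"
    using sort1_test_before_processing[OF assms(1)] TJ PJ TK PK unfolding L_def by blast+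
  have TJTK: "TJ < TK"
    using sort1_tests_in_order[OF assms(1,2)] TJ TK assms(5) unfolding L_def by blast
  have PJ_PK: "PJ \<noteq> PK" and PJ_TK: "PJ \<noteq> TK" using PJ PK TK assms(4) by auto
  have dd_kj: "dd J t p k j = (if TK < PJ then t k else 0) + (if PK < PJ then p k else 0)"
    using dd_sort1_eq[OF assms(1) L_def PJ TK PK] .
  have dd_jk: "dd J t p j k = (if TJ < PK then t j else 0) + (if PJ < PK then p j else 0)"
    using dd_sort1_eq[OF assms(1) L_def PK TJ PJ] .
  have between: "dur t p (L ! a) \<le> dur t p (L ! b)"
    if "c < a" "a < b" "b < length L" "L ! c = (e, False)" "L ! b = (e, True)" for a b c e
    using sort1_dur_le_processing[OF assms(1)] that unfolding L_def by blast
  consider "PJ < PK" "TK < PJ" | "PJ < PK" "PJ < TK" | "PK < PJ"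
    using PJ_PK PJ_TK by linarith
  then show ?thesis
  proof cases
    case 1
    \<comment> \<open>k was tested while j was queued for processing, and j was processed while k was\<close>
    have "t k \<le> p j" using between[OF TJTK 1(2) PJ(1) TJ(2) PJ(2)] TK PJ by (simp add: dur_def)
    moreover have "p j \<le> p k" using between[OF 1(2,1) PK(1) TK(2) PK(2)] PK PJ by (simp add: dur_def)
    ultimately show ?thesis using 1 TJPJ dd_kj dd_jk assms(5-9) by (auto simp: DD_def Dstar_def)
  next
    case 2
    then have "p j \<le> t k"
      using sort1_dur_le_test[OF assms(1,3) _ TK(1)[unfolded L_def]] TK PJ unfolding L_def
      by (fastforce simp: dur_def)
    then show ?thesis using 2 TJPJ dd_kj dd_jk assms(5-9) by (auto simp: DD_def Dstar_def)
  next
    case 3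
    then have TKPJ: "TK < PJ" using TKPK by simp
    have "t k \<le> p j" using between[OF TJTK TKPJ PJ(1) TJ(2) PJ(2)] TK PJ by (simp add: dur_def)
    moreover have "p k \<le> p j"
      using between[OF _ 3 PJ(1) TJ(2) PJ(2)] TJTK TKPK PK PJ by (simp add: dur_def)
    ultimately show ?thesis using 3 TKPJ TJTK TKPK dd_kj dd_jk assms(5-9)
      by (auto simp: DD_def Dstar_def)
  qed
qed

lemma red_pairs_Dstar_ge:
  assumes "red_pair \<mu> \<nu> t p i j" "red_pair \<mu> \<nu> t p i k" "0 < \<nu>" "\<nu> < 1" "t k \<ge> 0"
  shows "Dstar t p j k \<ge> (\<nu> + \<nu>\<^sup>2) * t k"
proof -
  define m where "m = max (t i) (p i)"
  have j: "t j \<ge> \<nu> * m" "p j \<ge> \<nu> * t j" and k: "t k \<le> m" "p k \<ge> \<nu> * t k"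
    using assms(1,2) by (auto simp: red_pair_def m_def)
  have "t j \<ge> \<nu> * t k" using j(1) k(1) assms(3) by (smt (verit) mult_left_mono)
  then have "(1 + \<nu>) * (\<nu> * t k) \<le> (1 + \<nu>) * t j" using assms(3) by simp
  then have "t j + p j \<ge> (\<nu> + \<nu>\<^sup>2) * t k" using j(2) by (simp add: algebra_simps power2_eq_square)
  moreover have "\<nu> * (\<nu> * t k) \<le> \<nu> * t k" "\<nu> * t k \<le> t k"
    using assms(3-5) by (simp_all add: mult_left_le_one_le mult_le_cancel_right1)
  then have "t k + p k \<ge> (\<nu> + \<nu>\<^sup>2) * t k" using k(2) by (simp add: algebra_simps power2_eq_square)
  ultimately show ?thesis by (simp add: Dstar_def)
qed

theorem mainTheorem9:
  fixes J :: "'a set" and t p :: "'a \<Rightarrow> real" and \<mu> \<nu> :: real and i j k :: 'a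
  assumes "finite J"
    and "\<forall>x\<in>J. t x \<ge> 0 \<and> p x \<ge> 0"
    and "general_position J t p"
    and "\<mu> > 1" and "0 < \<nu>" and "\<nu> < 1" and "\<mu> * \<nu> > 1"
    and "1 + 1 / \<mu> \<le> \<nu> + \<nu>\<^sup>2"
    and "i \<in> J" and "j \<in> J" and "k \<in> J"
    and "i \<noteq> j" and "i \<noteq> k" and "j \<noteq> k"
    and "red_pair \<mu> \<nu> t p i j" and "red_pair \<mu> \<nu> t p i k"
    and "t j \<le> t k"
  shows "Dstar t p j k \<ge> (\<nu> + \<nu>\<^sup>2) * t k \<and>
         DD J t p j k \<le> (1 + 1 / (\<nu> + \<nu>\<^sup>2)) * Dstar t p j k"
proof
  have nonneg: "t j \<ge> 0" "p j \<ge> 0" "t k \<ge> 0" "p k \<ge> 0" using assms(2,10,11) by auto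
  show D: "Dstar t p j k \<ge> (\<nu> + \<nu>\<^sup>2) * t k"
    using red_pairs_Dstar_ge[OF assms(15,16,5,6) nonneg(3)] .
  have "t j \<noteq> t k" using assms(3,10,11,14) by (auto simp: general_position_def)
  then have "DD J t p j k \<le> Dstar t p j k + t k"
    using DD_le_Dstar_add[OF assms(1,10,11,14) _ nonneg] assms(17) by simp
  also have "t k \<le> Dstar t p j k / (\<nu> + \<nu>\<^sup>2)"
    using D assms(5) by (simp add: pos_le_divide_eq add_pos_pos mult.commute)
  finally show "DD J t p j k \<le> (1 + 1 / (\<nu> + \<nu>\<^sup>2)) * Dstar t p j k"
    by (simp add: algebra_simps)
qed

end
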